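(* Let $\mathcal{M}=\{1,\dots,m\}$, let $Q=(q_{ij})$ be an $m\times m$ generator matrix ($q_{ij}\ge0$ for $i\ne j$, $q_{ii}=-\sum_{j\ne i}q_{ij}$), let $r>0$, and for $i\in\mathcal{M}$ let $N(i),R(i),c(i),h(i)>0$ and $\theta(i)\in\mathbb{R}$. Then the algebraic Riccati equation $$\frac{\varphi^2(i)}{R(i)}+r\varphi(i)-\sum_{j\in\mathcal{M}}q_{ij}\varphi(j)-N(i)=0,\quad i\in\mathcal{M},$$ has a unique solution $(\varphi(1),\dots,\varphi(m))$ with $\varphi(i)\ge0$ for all $i\in\mathcal{M}$, and for this $\varphi$ the linear system $$\Big(r+\frac{\varphi(i)}{R(i)}\Big)\psi(i)-\sum_{j\in\mathcal{M}}q_{ij}\psi(j)-(h(i)-\theta(i))\varphi(i)+N(i)c(i)=0,\quad i\in\mathcal{M},$$ has a unique solution $(\psi(1),\dots,\psi(m))$. *)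

theory Defs
  imports Main "HOL-Library.FuncSet" Complex_Main
begin

text \<open>Index set M = {1..m}; vectors over M are functions nat => real that are
  extensional on M (value undefined outside M), so that uniqueness is meaningful.\<close>

definition generator_matrix :: "nat \<Rightarrow> (nat \<Rightarrow> nat \<Rightarrow> real) \<Rightarrow> bool" where
  "generator_matrix m q \<longleftrightarrow>
     (\<forall>i\<in>{1..m}. \<forall>j\<in>{1..m}. i \<noteq> j \<longrightarrow> q i j \<ge> 0) \<and>
     (\<forall>i\<in>{1..m}. q i i = - (\<Sum>j\<in>{1..m} - {i}. q i j))"

definition riccati_eq ::
  "nat \<Rightarrow> (nat \<Rightarrow> nat \<Rightarrow> real) \<Rightarrow> real \<Rightarrow> (nat \<Rightarrow> real) \<Rightarrow> (nat \<Rightarrow> real) \<Rightarrow> (nat \<Rightarrow> real) \<Rightarrow> bool" where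
  "riccati_eq m q r N R \<phi> \<longleftrightarrow>
     (\<forall>i\<in>{1..m}. (\<phi> i)^2 / R i + r * \<phi> i - (\<Sum>j\<in>{1..m}. q i j * \<phi> j) - N i = 0)"

definition psi_eq ::
  "nat \<Rightarrow> (nat \<Rightarrow> nat \<Rightarrow> real) \<Rightarrow> real \<Rightarrow> (nat \<Rightarrow> real) \<Rightarrow> (nat \<Rightarrow> real) \<Rightarrow> (nat \<Rightarrow> real)
    \<Rightarrow> (nat \<Rightarrow> real) \<Rightarrow> (nat \<Rightarrow> real) \<Rightarrow> (nat \<Rightarrow> real) \<Rightarrow> (nat \<Rightarrow> real) \<Rightarrow> bool" where
  "psi_eq m q r N R c h \<theta> \<phi> \<psi> \<longleftrightarrow>
     (\<forall>i\<in>{1..m}. (r + \<phi> i / R i) * \<psi> i - (\<Sum>j\<in>{1..m}. q i j * \<psi> j)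
                  - (h i - \<theta> i) * \<phi> i + N i * c i = 0)"

end

theory Submission
  imports Defs
begin

text \<open>Because the off-diagonal entries of a generator are nonnegative, row \<open>i\<close> of either
  system can be solved for its diagonal unknown (a Jacobi step). This turns the system into a
  fixed-point problem \<open>x = T x\<close> for a map \<open>T\<close> that is monotone in every coordinate.
  A priori bounds give a box that \<open>T\<close> maps into itself, and the supremum of the subsolutions
  in the box is a fixed point; this gives existence.
  Uniqueness comes from the maximum principle for \<open>a\<^sub>i x\<^sub>i - (Q x)\<^sub>i\<close> with \<open>a > 0\<close>.
  The \<open>\<psi>\<close>-system has this form, and two nonnegative Riccati solutions \<open>\<phi>, \<chi>\<close> both solve
  the linear system with \<open>a\<^sub>i = r + (\<phi>\<^sub>i + \<chi>\<^sub>i) / R\<^sub>i\<close> and right-hand side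
  \<open>N\<^sub>i + \<phi>\<^sub>i \<chi>\<^sub>i / R\<^sub>i\<close>.\<close>

lemma monotone_map_box_has_fixpoint:
  fixes T :: "('a \<Rightarrow> 'b::conditionally_complete_lattice) \<Rightarrow> 'a \<Rightarrow> 'b"
  assumes "lo \<le> hi"
    and mono: "\<And>\<phi> \<psi> i. (\<And>j. j \<in> M \<Longrightarrow> lo \<le> \<phi> j \<and> \<phi> j \<le> \<psi> j \<and> \<psi> j \<le> hi) \<Longrightarrow> i \<in> M
                  \<Longrightarrow> T \<phi> i \<le> T \<psi> i"
    and box: "\<And>\<phi> i. (\<And>j. j \<in> M \<Longrightarrow> lo \<le> \<phi> j \<and> \<phi> j \<le> hi) \<Longrightarrow> i \<in> M
                  \<Longrightarrow> lo \<le> T \<phi> i \<and> T \<phi> i \<le> hi"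
  shows "\<exists>\<phi>. \<forall>i\<in>M. lo \<le> \<phi> i \<and> \<phi> i \<le> hi \<and> T \<phi> i = \<phi> i"
proof -
  define S where "S = {\<phi>. \<forall>i\<in>M. lo \<le> \<phi> i \<and> \<phi> i \<le> hi \<and> \<phi> i \<le> T \<phi> i}"
  define p where "p i = Sup ((\<lambda>\<phi>. \<phi> i) ` S)" for i
  have lo_in_S: "(\<lambda>_. lo) \<in> S"
    using box[of "\<lambda>_. lo"] \<open>lo \<le> hi\<close> by (auto simp: S_def)
  then have ne: "(\<lambda>\<phi>. \<phi> i) ` S \<noteq> {}" for i
    by auto
  have upper: "\<phi> i \<le> p i" if "\<phi> \<in> S" "i \<in> M" for \<phi> i
    unfolding p_def using that by (intro cSup_upper bdd_aboveI[of _ hi]) (auto simp: S_def)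
  have p_box: "lo \<le> p i \<and> p i \<le> hi" if "i \<in> M" for i
  proof
    show "lo \<le> p i"
      using upper[OF lo_in_S that] .
    show "p i \<le> hi"
      unfolding p_def using that by (intro cSup_least[OF ne]) (auto simp: S_def)
  qed
  have p_sub: "p i \<le> T p i" if "i \<in> M" for i
    unfolding p_def[of i]
  proof (rule cSup_least[OF ne])
    fix x assume "x \<in> (\<lambda>\<phi>. \<phi> i) ` S"
    then obtain \<phi> where "\<phi> \<in> S" "x = \<phi> i"
      by auto
    then have "x \<le> T \<phi> i"
      using that by (auto simp: S_def)
    also have "T \<phi> i \<le> T p i"
      using \<open>\<phi> \<in> S\<close> upper p_box that by (intro mono) (auto simp: S_def)
    finally show "x \<le> T p i" .
  qed
  have Tp_box: "lo \<le> T p i \<and> T p i \<le> hi" if "i \<in> M" for i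
    using box[of p i] p_box that by blast
  have "T p \<in> S"
    unfolding S_def
  proof (intro CollectI ballI conjI)
    fix i assume "i \<in> M"
    then show "lo \<le> T p i" "T p i \<le> hi"
      using Tp_box by auto
    show "T p i \<le> T (T p) i"
      using p_box p_sub Tp_box \<open>i \<in> M\<close> by (intro mono) auto
  qed
  then have "T p i \<le> p i" if "i \<in> M" for i
    using upper that by blast
  then show ?thesis
    using p_box p_sub by (intro exI[of _ p]) (auto intro: order.antisym)
qed

lemma ex1_extensional:
  assumes "\<exists>f. P f"
    and "\<And>f g. P f \<Longrightarrow> P g \<Longrightarrow> \<forall>i\<in>A. f i = g i"
    and "\<And>f g. \<forall>i\<in>A. f i = g i \<Longrightarrow> P f \<Longrightarrow> P g"
  shows "\<exists>!f. f \<in> extensional A \<and> P f"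
proof (rule ex_ex1I)
  from assms(1) obtain f where "P f" ..
  then show "\<exists>f. f \<in> extensional A \<and> P f"
    using assms(3)[of f "restrict f A"] by auto
next
  show "f = g" if "f \<in> extensional A \<and> P f" "g \<in> extensional A \<and> P g" for f g
    using that assms(2)[of f g] by (intro extensionalityI[of _ A]) auto
qed

lemma sum_split_diag:
  fixes d :: "nat \<Rightarrow> 'a::comm_ring"
  assumes "i \<in> {1..m}"
  shows "(\<Sum>j\<in>{1..m}. q i j * d j) = q i i * d i + (\<Sum>j\<in>{1..m}-{i}. q i j * d j)"
  using sum.remove[of "{1..m}" i "\<lambda>j. q i j * d j"] assms by simp

lemma generator_matrix_offdiag_nonneg:
  "generator_matrix m q \<Longrightarrow> i \<in> {1..m} \<Longrightarrow> j \<in> {1..m} - {i} \<Longrightarrow> q i j \<ge> 0"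
  by (auto simp: generator_matrix_def)

lemma generator_matrix_offdiag_sum_const:
  assumes "generator_matrix m q" "i \<in> {1..m}"
  shows "(\<Sum>j\<in>{1..m}-{i}. q i j * a) = - q i i * a"
  using assms by (simp add: generator_matrix_def sum_distrib_right)

lemma generator_matrix_diag_nonpos:
  assumes "generator_matrix m q" "i \<in> {1..m}"
  shows "q i i \<le> 0"
  using generator_matrix_offdiag_sum_const[OF assms, of 1]
    sum_nonneg[of "{1..m}-{i}" "\<lambda>j. q i j"] generator_matrix_offdiag_nonneg[OF assms]
  by force

lemma generator_matrix_offdiag_sum_mono:
  assumes "generator_matrix m q" "i \<in> {1..m}" "\<And>j. j \<in> {1..m} \<Longrightarrow> d j \<le> e j"
  shows "(\<Sum>j\<in>{1..m}-{i}. q i j * d j) \<le> (\<Sum>j\<in>{1..m}-{i}. q i j * e j)"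
  using assms generator_matrix_offdiag_nonneg[OF assms(1,2)]
  by (intro sum_mono mult_left_mono) auto

lemma generator_matrix_offdiag_sum_bounds:
  assumes "generator_matrix m q" "i \<in> {1..m}" "\<And>j. j \<in> {1..m} \<Longrightarrow> lo \<le> d j \<and> d j \<le> hi"
  shows "- q i i * lo \<le> (\<Sum>j\<in>{1..m}-{i}. q i j * d j)"
    and "(\<Sum>j\<in>{1..m}-{i}. q i j * d j) \<le> - q i i * hi"
  using generator_matrix_offdiag_sum_mono[OF assms(1,2), of "\<lambda>_. lo" d]
    generator_matrix_offdiag_sum_mono[OF assms(1,2), of d "\<lambda>_. hi"]
    generator_matrix_offdiag_sum_const[OF assms(1,2)] assms(3)
  by auto

lemma generator_matrix_comparison:
  assumes gen: "generator_matrix m q"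
    and a_pos: "\<forall>i\<in>{1..m}. a i > (0::real)"
    and le: "\<forall>i\<in>{1..m}. a i * x i - (\<Sum>j\<in>{1..m}. q i j * x j) \<le> a i * y i - (\<Sum>j\<in>{1..m}. q i j * y j)"
  shows "\<forall>i\<in>{1..m}. x i \<le> y i"
proof (cases "m = 0")
  case False
  let ?M = "{1..m}"
  define d where "d j = x j - y j" for j
  have "Max (d ` ?M) \<in> d ` ?M"
    using False by (intro Max_in) auto
  then obtain k where k: "k \<in> ?M" "d k = Max (d ` ?M)"
    by auto
  have d_le_dk: "d j \<le> d k" if "j \<in> ?M" for j
    using k that by auto
  have "a k * d k \<le> (\<Sum>j\<in>?M. q k j * d j)"
    using le k(1) by (simp add: d_def algebra_simps sum_subtractf)
  also have "\<dots> = (\<Sum>j\<in>?M-{k}. q k j * d j) - (\<Sum>j\<in>?M-{k}. q k j * d k)"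
    using sum_split_diag[OF k(1), of q d] generator_matrix_offdiag_sum_const[OF gen k(1)] by simp
  also have "\<dots> \<le> 0"
    using generator_matrix_offdiag_sum_mono[OF gen k(1) d_le_dk] by simp
  finally have "d k \<le> 0"
    using a_pos[rule_format, OF k(1)] by (simp add: mult_le_0_iff)
  then show ?thesis
    using d_le_dk by (force simp: d_def)
qed simp

lemma generator_matrix_linear_system_unique:
  assumes "generator_matrix m q"
    and "\<forall>i\<in>{1..m}. a i > (0::real)"
    and "\<forall>i\<in>{1..m}. a i * x i - (\<Sum>j\<in>{1..m}. q i j * x j) = f i"
    and "\<forall>i\<in>{1..m}. a i * y i - (\<Sum>j\<in>{1..m}. q i j * y j) = f i"
  shows "\<forall>i\<in>{1..m}. x i = y i"
  using generator_matrix_comparison[OF assms(1,2), of x y]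
    generator_matrix_comparison[OF assms(1,2), of y x] assms(3,4)
  by (auto intro: antisym)

definition jacobi_map ::
    "nat \<Rightarrow> (nat \<Rightarrow> nat \<Rightarrow> real) \<Rightarrow> (nat \<Rightarrow> real) \<Rightarrow> (nat \<Rightarrow> real) \<Rightarrow> (nat \<Rightarrow> real) \<Rightarrow> nat \<Rightarrow> real" where
  "jacobi_map m q a f x i = ((\<Sum>j\<in>{1..m}-{i}. q i j * x j) + f i) / (a i - q i i)"

lemma linear_row_iff_jacobi_fixpoint:
  fixes x :: "nat \<Rightarrow> real"
  assumes "i \<in> {1..m}" "a i \<noteq> q i i"
  shows "a i * x i - (\<Sum>j\<in>{1..m}. q i j * x j) = f i \<longleftrightarrow> jacobi_map m q a f x i = x i"
  using sum_split_diag[OF assms(1), of q x] assms(2)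
  by (auto simp: jacobi_map_def field_simps)

lemma jacobi_map_mono:
  assumes "generator_matrix m q" "i \<in> {1..m}" "a i > 0" "\<And>j. j \<in> {1..m} \<Longrightarrow> x j \<le> y j"
  shows "jacobi_map m q a f x i \<le> jacobi_map m q a f y i"
  unfolding jacobi_map_def
  using generator_matrix_diag_nonpos[OF assms(1,2)] generator_matrix_offdiag_sum_mono[OF assms(1,2,4)]
    assms(3)
  by (intro divide_right_mono) auto

lemma jacobi_map_bounded:
  assumes gen: "generator_matrix m q" and i: "i \<in> {1..m}" and "a i > 0"
    and "\<bar>f i\<bar> \<le> a i * K" and "\<And>j. j \<in> {1..m} \<Longrightarrow> -K \<le> x j \<and> x j \<le> K"
  shows "\<bar>jacobi_map m q a f x i\<bar> \<le> K"
proof -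
  have diag_pos: "a i - q i i > 0"
    using generator_matrix_diag_nonpos[OF gen i] \<open>a i > 0\<close> by simp
  have "- q i i * (-K) \<le> (\<Sum>j\<in>{1..m}-{i}. q i j * x j)"
    and "(\<Sum>j\<in>{1..m}-{i}. q i j * x j) \<le> - q i i * K"
    using generator_matrix_offdiag_sum_bounds[OF gen i, of "-K" x K] assms(5) by auto
  with \<open>\<bar>f i\<bar> \<le> a i * K\<close> have "\<bar>(\<Sum>j\<in>{1..m}-{i}. q i j * x j) + f i\<bar> \<le> (a i - q i i) * K"
    by (auto simp: algebra_simps abs_le_iff)
  then show ?thesis
    unfolding jacobi_map_def using diag_pos by (simp add: abs_divide pos_divide_le_eq mult.commute)
qed

lemma generator_matrix_linear_system_exists:
  assumes gen: "generator_matrix m q"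
    and a_pos: "\<forall>i\<in>{1..m}. a i > (0::real)"
  shows "\<exists>x. \<forall>i\<in>{1..m}. a i * x i - (\<Sum>j\<in>{1..m}. q i j * x j) = f i"
proof -
  let ?M = "{1..m}"
  define K where "K = (\<Sum>i\<in>?M. \<bar>f i\<bar> / a i)"
  have K_nonneg: "K \<ge> 0"
    unfolding K_def using a_pos by (auto intro!: sum_nonneg divide_nonneg_pos)
  have f_le: "\<bar>f i\<bar> \<le> a i * K" if "i \<in> ?M" for i
  proof -
    have "\<bar>f i\<bar> / a i \<le> K"
      unfolding K_def using that a_pos by (auto intro!: member_le_sum divide_nonneg_pos)
    then show ?thesis
      using a_pos that by (simp add: pos_divide_le_eq mult.commute)
  qed
  have "\<exists>x. \<forall>i\<in>?M. -K \<le> x i \<and> x i \<le> K \<and> jacobi_map m q a f x i = x i"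
  proof (rule monotone_map_box_has_fixpoint)
    show "-K \<le> K"
      using K_nonneg by simp
    show "jacobi_map m q a f x i \<le> jacobi_map m q a f y i"
      if "\<And>j. j \<in> ?M \<Longrightarrow> -K \<le> x j \<and> x j \<le> y j \<and> y j \<le> K" "i \<in> ?M" for x y i
      using that a_pos by (intro jacobi_map_mono[OF gen]) auto
    show "-K \<le> jacobi_map m q a f x i \<and> jacobi_map m q a f x i \<le> K"
      if "\<And>j. j \<in> ?M \<Longrightarrow> -K \<le> x j \<and> x j \<le> K" "i \<in> ?M" for x i
      using jacobi_map_bounded[OF gen that(2), of a f K x]
        a_pos that f_le
      by (auto simp: abs_le_iff)
  qed
  then obtain x where "\<forall>i\<in>?M. jacobi_map m q a f x i = x i"
    by blast
  moreover have "a i \<noteq> q i i" if "i \<in> ?M" for i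
    using generator_matrix_diag_nonpos[OF gen that] a_pos that by force
  ultimately show ?thesis
    using linear_row_iff_jacobi_fixpoint by blast
qed

text \<open>The nonnegative root of \<open>x\<^sup>2 / R + a x = s\<close>.\<close>

definition quadratic_root :: "real \<Rightarrow> real \<Rightarrow> real \<Rightarrow> real" where
  "quadratic_root a R s = R / 2 * (sqrt (a\<^sup>2 + 4 * s / R) - a)"

lemma quadratic_root_eq:
  assumes "R > 0" "s \<ge> 0"
  shows "(quadratic_root a R s)\<^sup>2 / R + a * quadratic_root a R s = s"
proof -
  define S where "S = sqrt (a\<^sup>2 + 4 * s / R)"
  have S2: "S\<^sup>2 = a\<^sup>2 + 4 * s / R"
    unfolding S_def using assms by simp
  have "(quadratic_root a R s)\<^sup>2 / R + a * quadratic_root a R s = R / 4 * (S\<^sup>2 - a\<^sup>2)"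
    unfolding quadratic_root_def S_def[symmetric] using assms
    by (simp add: field_simps power2_eq_square)
  also have "\<dots> = s"
    using S2 assms by simp
  finally show ?thesis .
qed

lemma quadratic_root_nonneg:
  assumes "R > 0" "s \<ge> 0"
  shows "quadratic_root a R s \<ge> 0"
proof -
  have "\<bar>a\<bar> = sqrt (a\<^sup>2)"
    by simp
  also have "\<dots> \<le> sqrt (a\<^sup>2 + 4 * s / R)"
    using assms by (intro real_sqrt_le_mono) simp
  finally show ?thesis
    unfolding quadratic_root_def using assms by (simp add: abs_le_iff)
qed

lemma quadratic_root_mono:
  assumes "R > 0" "s \<le> s'"
  shows "quadratic_root a R s \<le> quadratic_root a R s'"
  unfolding quadratic_root_def using assms by (simp add: divide_right_mono)

lemma quadratic_root_le:
  assumes "R > 0" "a \<ge> 0" "s \<ge> 0" "K \<ge> 0" "s \<le> K\<^sup>2 / R + a * K"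
  shows "quadratic_root a R s \<le> K"
proof (rule ccontr)
  let ?x = "quadratic_root a R s"
  assume "\<not> ?x \<le> K"
  then have "K\<^sup>2 / R < ?x\<^sup>2 / R" and "a * K \<le> a * ?x"
    using assms by (auto intro!: divide_strict_right_mono power_strict_mono mult_left_mono)
  then have "K\<^sup>2 / R + a * K < s"
    using quadratic_root_eq[OF assms(1,3), of a] by linarith
  with assms(5) show False
    by simp
qed

definition riccati_map ::
    "nat \<Rightarrow> (nat \<Rightarrow> nat \<Rightarrow> real) \<Rightarrow> real \<Rightarrow> (nat \<Rightarrow> real) \<Rightarrow> (nat \<Rightarrow> real) \<Rightarrow> (nat \<Rightarrow> real) \<Rightarrow> nat \<Rightarrow> real" where
  "riccati_map m q r N R \<phi> i = quadratic_root (r - q i i) (R i) (N i + (\<Sum>j\<in>{1..m}-{i}. q i j * \<phi> j))"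

lemma riccati_row_of_fixpoint:
  assumes gen: "generator_matrix m q" and i: "i \<in> {1..m}" and "R i > 0" "N i \<ge> 0"
    and "\<And>j. j \<in> {1..m} \<Longrightarrow> \<phi> j \<ge> 0" and "riccati_map m q r N R \<phi> i = \<phi> i"
  shows "(\<phi> i)\<^sup>2 / R i + r * \<phi> i - (\<Sum>j\<in>{1..m}. q i j * \<phi> j) - N i = 0"
proof -
  have "0 \<le> N i + (\<Sum>j\<in>{1..m}-{i}. q i j * \<phi> j)"
    using assms(4,5) generator_matrix_offdiag_nonneg[OF gen i]
    by (intro add_nonneg_nonneg sum_nonneg mult_nonneg_nonneg) auto
  from quadratic_root_eq[OF \<open>R i > 0\<close> this, of "r - q i i"]
  have "(\<phi> i)\<^sup>2 / R i + (r - q i i) * \<phi> i = N i + (\<Sum>j\<in>{1..m}-{i}. q i j * \<phi> j)"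
    using assms(6) by (simp add: riccati_map_def)
  then show ?thesis
    using sum_split_diag[OF i, of q \<phi>] by (simp add: algebra_simps)
qed

lemma riccati_map_mono:
  assumes gen: "generator_matrix m q" and i: "i \<in> {1..m}" and "R i > 0"
    and "\<And>j. j \<in> {1..m} \<Longrightarrow> \<phi> j \<le> \<psi> j"
  shows "riccati_map m q r N R \<phi> i \<le> riccati_map m q r N R \<psi> i"
  unfolding riccati_map_def using generator_matrix_offdiag_sum_mono[OF gen i assms(4)] \<open>R i > 0\<close>
  by (intro quadratic_root_mono) auto

lemma riccati_map_bounded:
  assumes gen: "generator_matrix m q" and i: "i \<in> {1..m}" and "r > 0" "R i > 0"
    and "0 \<le> N i" "N i \<le> r * K" and box: "\<And>j. j \<in> {1..m} \<Longrightarrow> 0 \<le> \<phi> j \<and> \<phi> j \<le> K"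
  shows "0 \<le> riccati_map m q r N R \<phi> i \<and> riccati_map m q r N R \<phi> i \<le> K"
proof -
  let ?s = "N i + (\<Sum>j\<in>{1..m}-{i}. q i j * \<phi> j)"
  have "0 \<le> r * K"
    using assms(5,6) by linarith
  then have "K \<ge> 0"
    using \<open>r > 0\<close> by (simp add: zero_le_mult_iff)
  have "0 \<le> (\<Sum>j\<in>{1..m}-{i}. q i j * \<phi> j)" "(\<Sum>j\<in>{1..m}-{i}. q i j * \<phi> j) \<le> - q i i * K"
    using generator_matrix_offdiag_sum_bounds[OF gen i box] by auto
  with assms(5,6) have "0 \<le> ?s" and "?s \<le> (r - q i i) * K"
    by (auto simp: algebra_simps)
  moreover have "0 \<le> K\<^sup>2 / R i"
    using \<open>R i > 0\<close> by simp
  ultimately have "?s \<le> K\<^sup>2 / R i + (r - q i i) * K"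
    by linarith
  moreover have "r - q i i \<ge> 0"
    using generator_matrix_diag_nonpos[OF gen i] \<open>r > 0\<close> by simp
  ultimately show ?thesis
    unfolding riccati_map_def using \<open>0 \<le> ?s\<close> \<open>R i > 0\<close> \<open>K \<ge> 0\<close>
    by (auto intro!: quadratic_root_nonneg quadratic_root_le)
qed

lemma riccati_eq_exists:
  assumes gen: "generator_matrix m q" and "r > 0"
    and pos: "\<forall>i\<in>{1..m}. N i \<ge> 0 \<and> R i > 0"
  shows "\<exists>\<phi>. (\<forall>i\<in>{1..m}. \<phi> i \<ge> 0) \<and> riccati_eq m q r N R \<phi>"
proof -
  let ?M = "{1..m}"
  define K where "K = (\<Sum>i\<in>?M. N i) / r"
  have K_nonneg: "K \<ge> 0"
    unfolding K_def using pos \<open>r > 0\<close> by (auto intro!: sum_nonneg divide_nonneg_pos)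
  have N_le: "N i \<le> r * K" if "i \<in> ?M" for i
    unfolding K_def using pos that \<open>r > 0\<close> by (auto intro!: member_le_sum)
  have "\<exists>\<phi>. \<forall>i\<in>?M. 0 \<le> \<phi> i \<and> \<phi> i \<le> K \<and> riccati_map m q r N R \<phi> i = \<phi> i"
  proof (rule monotone_map_box_has_fixpoint[OF K_nonneg])
    show "riccati_map m q r N R \<phi> i \<le> riccati_map m q r N R \<psi> i"
      if "\<And>j. j \<in> ?M \<Longrightarrow> 0 \<le> \<phi> j \<and> \<phi> j \<le> \<psi> j \<and> \<psi> j \<le> K" "i \<in> ?M" for \<phi> \<psi> i
      using that pos by (intro riccati_map_mono[OF gen]) auto
    show "0 \<le> riccati_map m q r N R \<phi> i \<and> riccati_map m q r N R \<phi> i \<le> K"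
      if "\<And>j. j \<in> ?M \<Longrightarrow> 0 \<le> \<phi> j \<and> \<phi> j \<le> K" "i \<in> ?M" for \<phi> i
      using that pos N_le by (intro riccati_map_bounded[OF gen _ \<open>r > 0\<close>]) auto
  qed
  then obtain \<phi> where \<phi>: "\<forall>i\<in>?M. 0 \<le> \<phi> i \<and> \<phi> i \<le> K \<and> riccati_map m q r N R \<phi> i = \<phi> i"
    by blast
  have "riccati_eq m q r N R \<phi>"
    unfolding riccati_eq_def
  proof
    fix i assume "i \<in> ?M"
    then show "(\<phi> i)\<^sup>2 / R i + r * \<phi> i - (\<Sum>j\<in>?M. q i j * \<phi> j) - N i = 0"
      using \<phi> pos by (intro riccati_row_of_fixpoint[OF gen]) auto
  qed
  with \<phi> show ?thesis
    by blast
qed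

lemma riccati_eq_unique:
  assumes gen: "generator_matrix m q" and "r > 0"
    and R_pos: "\<forall>i\<in>{1..m}. R i > 0"
    and \<phi>: "\<forall>i\<in>{1..m}. \<phi> i \<ge> 0" "riccati_eq m q r N R \<phi>"
    and \<chi>: "\<forall>i\<in>{1..m}. \<chi> i \<ge> 0" "riccati_eq m q r N R \<chi>"
  shows "\<forall>i\<in>{1..m}. \<phi> i = \<chi> i"
proof -
  have linear_form: "(r + (x i + y i) / R i) * x i - (\<Sum>j\<in>{1..m}. q i j * x j) = N i + x i * y i / R i"
    if "riccati_eq m q r N R x" "i \<in> {1..m}" for x y :: "nat \<Rightarrow> real" and i
    using that unfolding riccati_eq_def
    by (simp add: algebra_simps power2_eq_square add_divide_distrib)
  show ?thesis
  proof (rule generator_matrix_linear_system_unique[OF gen])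
    show "\<forall>i\<in>{1..m}. r + (\<phi> i + \<chi> i) / R i > 0"
      using \<open>r > 0\<close> R_pos \<phi>(1) \<chi>(1) by (auto intro!: add_pos_nonneg)
    show "\<forall>i\<in>{1..m}. (r + (\<phi> i + \<chi> i) / R i) * \<phi> i - (\<Sum>j\<in>{1..m}. q i j * \<phi> j)
                       = N i + \<phi> i * \<chi> i / R i"
      using linear_form[OF \<phi>(2)] by blast
    show "\<forall>i\<in>{1..m}. (r + (\<phi> i + \<chi> i) / R i) * \<chi> i - (\<Sum>j\<in>{1..m}. q i j * \<chi> j)
                       = N i + \<phi> i * \<chi> i / R i"
      using linear_form[OF \<chi>(2), of _ \<phi>] by (simp add: add.commute mult.commute)
  qed
qed

lemma riccati_eq_cong:
  assumes "\<forall>i\<in>{1..m}. \<phi> i = \<chi> i"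
  shows "riccati_eq m q r N R \<phi> \<longleftrightarrow> riccati_eq m q r N R \<chi>"
proof -
  have "(\<Sum>j\<in>{1..m}. q i j * \<phi> j) = (\<Sum>j\<in>{1..m}. q i j * \<chi> j)" for i
    using assms by (intro sum.cong) auto
  then show ?thesis
    using assms by (simp add: riccati_eq_def)
qed

lemma psi_eq_cong:
  assumes "\<forall>i\<in>{1..m}. \<psi> i = \<psi>' i"
  shows "psi_eq m q r N R c h \<theta> \<phi> \<psi> \<longleftrightarrow> psi_eq m q r N R c h \<theta> \<phi> \<psi>'"
proof -
  have "(\<Sum>j\<in>{1..m}. q i j * \<psi> j) = (\<Sum>j\<in>{1..m}. q i j * \<psi>' j)" for i
    using assms by (intro sum.cong) auto
  then show ?thesis
    using assms by (simp add: psi_eq_def)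
qed

lemma riccati_eq_ex1:
  assumes gen: "generator_matrix m q" and "r > 0"
    and pos: "\<forall>i\<in>{1..m}. N i \<ge> 0 \<and> R i > 0"
  shows "\<exists>!\<phi>. \<phi> \<in> extensional {1..m} \<and> (\<forall>i\<in>{1..m}. \<phi> i \<ge> 0) \<and> riccati_eq m q r N R \<phi>"
proof (rule ex1_extensional)
  show "\<exists>\<phi>. (\<forall>i\<in>{1..m}. \<phi> i \<ge> 0) \<and> riccati_eq m q r N R \<phi>"
    using riccati_eq_exists[OF assms] .
  show "\<forall>i\<in>{1..m}. \<phi> i = \<chi> i"
    if "(\<forall>i\<in>{1..m}. \<phi> i \<ge> 0) \<and> riccati_eq m q r N R \<phi>"
      and "(\<forall>i\<in>{1..m}. \<chi> i \<ge> 0) \<and> riccati_eq m q r N R \<chi>" for \<phi> \<chi>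
    using that pos by (intro riccati_eq_unique[OF gen \<open>r > 0\<close>]) auto
  show "(\<forall>i\<in>{1..m}. \<chi> i \<ge> 0) \<and> riccati_eq m q r N R \<chi>"
    if "\<forall>i\<in>{1..m}. \<phi> i = \<chi> i" and "(\<forall>i\<in>{1..m}. \<phi> i \<ge> 0) \<and> riccati_eq m q r N R \<phi>"
    for \<phi> \<chi>
    using that riccati_eq_cong[OF that(1)] by auto
qed

lemma psi_eq_ex1:
  assumes gen: "generator_matrix m q" and "r > 0"
    and R_pos: "\<forall>i\<in>{1..m}. R i > 0" and \<phi>_nonneg: "\<forall>i\<in>{1..m}. \<phi> i \<ge> 0"
  shows "\<exists>!\<psi>. \<psi> \<in> extensional {1..m} \<and> psi_eq m q r N R c h \<theta> \<phi> \<psi>"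
proof (rule ex1_extensional)
  let ?a = "\<lambda>i. r + \<phi> i / R i" and ?f = "\<lambda>i. (h i - \<theta> i) * \<phi> i - N i * c i"
  have a_pos: "\<forall>i\<in>{1..m}. ?a i > 0"
    using \<open>r > 0\<close> R_pos \<phi>_nonneg by (auto intro!: add_pos_nonneg)
  have linear_system: "psi_eq m q r N R c h \<theta> \<phi> \<psi> \<longleftrightarrow>
      (\<forall>i\<in>{1..m}. ?a i * \<psi> i - (\<Sum>j\<in>{1..m}. q i j * \<psi> j) = ?f i)" for \<psi>
    unfolding psi_eq_def by (simp add: algebra_simps)
  show "\<exists>\<psi>. psi_eq m q r N R c h \<theta> \<phi> \<psi>"
    using generator_matrix_linear_system_exists[OF gen a_pos] by (simp add: linear_system)
  show "\<forall>i\<in>{1..m}. \<psi> i = \<psi>' i"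
    if "psi_eq m q r N R c h \<theta> \<phi> \<psi>" "psi_eq m q r N R c h \<theta> \<phi> \<psi>'" for \<psi> \<psi>'
    using generator_matrix_linear_system_unique[OF gen a_pos] that by (simp add: linear_system)
  show "psi_eq m q r N R c h \<theta> \<phi> \<psi>'"
    if "\<forall>i\<in>{1..m}. \<psi> i = \<psi>' i" "psi_eq m q r N R c h \<theta> \<phi> \<psi>" for \<psi> \<psi>'
    using psi_eq_cong[OF that(1)] that(2) by simp
qed

theorem lemma5p1:
  fixes m :: nat and q :: "nat \<Rightarrow> nat \<Rightarrow> real" and r :: real
    and N R c h \<theta> :: "nat \<Rightarrow> real"
  assumes "m \<ge> 1"
    and "generator_matrix m q"
    and "r > 0"
    and "\<forall>i\<in>{1..m}. N i > 0 \<and> R i > 0 \<and> c i > 0 \<and> h i > 0"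
  shows "(\<exists>!\<phi>. \<phi> \<in> extensional {1..m} \<and> (\<forall>i\<in>{1..m}. \<phi> i \<ge> 0) \<and> riccati_eq m q r N R \<phi>) \<and>
         (\<forall>\<phi>. \<phi> \<in> extensional {1..m} \<and> (\<forall>i\<in>{1..m}. \<phi> i \<ge> 0) \<and> riccati_eq m q r N R \<phi> \<longrightarrow>
           (\<exists>!\<psi>. \<psi> \<in> extensional {1..m} \<and> psi_eq m q r N R c h \<theta> \<phi> \<psi>))"
proof -
  have N_R: "\<forall>i\<in>{1..m}. N i \<ge> 0 \<and> R i > 0"
    using assms(4) by auto
  show ?thesis
  proof (intro conjI allI impI)
    show "\<exists>!\<phi>. \<phi> \<in> extensional {1..m} \<and> (\<forall>i\<in>{1..m}. \<phi> i \<ge> 0) \<and> riccati_eq m q r N R \<phi>"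
      using riccati_eq_ex1[OF assms(2,3) N_R] .
    fix \<phi> assume "\<phi> \<in> extensional {1..m} \<and> (\<forall>i\<in>{1..m}. \<phi> i \<ge> 0) \<and> riccati_eq m q r N R \<phi>"
    then show "\<exists>!\<psi>. \<psi> \<in> extensional {1..m} \<and> psi_eq m q r N R c h \<theta> \<phi> \<psi>"
      using N_R by (intro psi_eq_ex1[OF assms(2,3)]) auto
  qed
qed

end
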